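(* The axiom system $E_{FTP}$ is head normalizing for $T(\Sigma_{FTP})$: for every $t\in T(\Sigma_{FTP})$ there exists $t'\in T(\Sigma_{FTP})$ in head normal form such that $E_{FTP}\vdash t=t'$.
   Context: Fix a finite nonempty set $\mathcal A$ of actions, a finite set $\mathcal P$ of predicates, a subset $\mathcal P^I\subseteq\mathcal P$ of "implicit" predicates, and for each $P\in\mathcal P^I$ a set $\mathcal A_P\subseteq\mathcal A$. The signature $\Sigma_{FTP}$ consists of a constant $\delta$, a constant $\kappa_P$ for each $P\in\mathcal P$, a unary prefix $a.\_$ for each $a\in\mathcal A$, and binary $+$. Its operational semantics (transitions $\xrightarrow{a}$ and predicates $P\,t$ on closed terms) is the least one closed under the rules: $a.x\xrightarrow{a}x$; if $x\xrightarrow{a}x'$ then $x+y\xrightarrow{a}x'$; if $y\xrightarrow{a}y'$ then $x+y\xrightarrow{a}y'$; $P\kappa_P$; if $Px$ then $P(x+y)$; if $Py$ then $P(x+y)$; if $Px$ then $P(a.x)$ for all $P\in\mathcal P^I$ and $a\in\mathcal A_P$. $E_{FTP}$ consists of the axioms $x+y=y+x$, $(x+y)+z=x+(y+z)$, $x+x=x$, $x+\delta=x$, and $a.(x+\kappa_P)=a.(x+\kappa_P)+\kappa_P$ for all $P\in\mathcal P^I$, $a\in\mathcal A_P$. $E\vdash s=t$ means $s=t$ is derivable in equational logic (reflexivity, symmetry, transitivity, substitution instances, congruence). For a signature $\Sigma\supseteq\Sigma_{FTP}$, a closed term $t$ is in head normal form if $t=\sum_{i\in I}a_i.t_i+\sum_{j\in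 J}\kappa_{P_j}$ (finite sums, empty sum being $\delta$) where $\{P_j\mid j\in J\}$ is exactly the set of predicates satisfied by $t$. *)

theory Defs
  imports Main
begin

text \<open>Open terms over the signature Sigma_FTP, with variables of type 'v.
  Actions have type 'a (finite, nonempty), predicates type 'p (finite).\<close>

datatype ('a, 'p, 'v) ftp_term =
    Var 'v
  | Delta
  | Kappa 'p
  | Pref 'a "('a, 'p, 'v) ftp_term"
  | Plus "('a, 'p, 'v) ftp_term" "('a, 'p, 'v) ftp_term"

fun closed :: "('a, 'p, 'v) ftp_term \<Rightarrow> bool" where
  "closed (Var x) = False"
| "closed Delta = True"
| "closed (Kappa P) = True"
| "closed (Pref a t) = closed t"
| "closed (Plus t u) = (closed t \<and> closed u)"

fun subst :: "('v \<Rightarrow> ('a, 'p, 'w) ftp_term) \<Rightarrow> ('a, 'p, 'v) ftp_term \<Rightarrow> ('a, 'p, 'w) ftp_term" where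
  "subst \<sigma> (Var x) = \<sigma> x"
| "subst \<sigma> Delta = Delta"
| "subst \<sigma> (Kappa P) = Kappa P"
| "subst \<sigma> (Pref a t) = Pref a (subst \<sigma> t)"
| "subst \<sigma> (Plus t u) = Plus (subst \<sigma> t) (subst \<sigma> u)"

text \<open>Predicates satisfied by terms (least relation closed under the rules).
  PI = implicit predicates, AP P = the set A_P.\<close>
inductive sat :: "'p set \<Rightarrow> ('p \<Rightarrow> 'a set) \<Rightarrow> ('a, 'p, 'v) ftp_term \<Rightarrow> 'p \<Rightarrow> bool"
  for PI :: "'p set" and AP :: "'p \<Rightarrow> 'a set" where
  sat_kappa: "sat PI AP (Kappa P) P"
| sat_plusL: "sat PI AP x P \<Longrightarrow> sat PI AP (Plus x y) P"
| sat_plusR: "sat PI AP y P \<Longrightarrow> sat PI AP (Plus x y) P"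
| sat_pref: "P \<in> PI \<Longrightarrow> a \<in> AP P \<Longrightarrow> sat PI AP x P \<Longrightarrow> sat PI AP (Pref a x) P"

text \<open>Transitions (part of the operational semantics; not needed by the statement itself).\<close>
inductive trans :: "('a, 'p, 'v) ftp_term \<Rightarrow> 'a \<Rightarrow> ('a, 'p, 'v) ftp_term \<Rightarrow> bool" where
  "trans (Pref a x) a x"
| "trans x a x' \<Longrightarrow> trans (Plus x y) a x'"
| "trans y a y' \<Longrightarrow> trans (Plus x y) a y'"

inductive eq_deriv :: "(('a, 'p, 'v) ftp_term \<times> ('a, 'p, 'v) ftp_term) set
    \<Rightarrow> ('a, 'p, 'v) ftp_term \<Rightarrow> ('a, 'p, 'v) ftp_term \<Rightarrow> bool"
  for E where
  eq_refl: "eq_deriv E t t"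
| eq_sym: "eq_deriv E s t \<Longrightarrow> eq_deriv E t s"
| eq_trans: "eq_deriv E s t \<Longrightarrow> eq_deriv E t u \<Longrightarrow> eq_deriv E s u"
| eq_inst: "(l, r) \<in> E \<Longrightarrow> eq_deriv E (subst \<sigma> l) (subst \<sigma> r)"
| eq_pref: "eq_deriv E s t \<Longrightarrow> eq_deriv E (Pref a s) (Pref a t)"
| eq_plus: "eq_deriv E s1 t1 \<Longrightarrow> eq_deriv E s2 t2 \<Longrightarrow> eq_deriv E (Plus s1 s2) (Plus t1 t2)"

text \<open>The axiom system E_FTP (variables are natural numbers: x = 0, y = 1, z = 2).\<close>
definition E_FTP :: "'p set \<Rightarrow> ('p \<Rightarrow> 'a set) \<Rightarrow> (('a, 'p, nat) ftp_term \<times> ('a, 'p, nat) ftp_term) set" where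
  "E_FTP PI AP =
     {(Plus (Var 0) (Var 1), Plus (Var 1) (Var 0)),
      (Plus (Plus (Var 0) (Var 1)) (Var 2), Plus (Var 0) (Plus (Var 1) (Var 2))),
      (Plus (Var 0) (Var 0), Var 0),
      (Plus (Var 0) Delta, Var 0)}
   \<union> {(Pref a (Plus (Var 0) (Kappa P)), Plus (Pref a (Plus (Var 0) (Kappa P))) (Kappa P))
       | P a. P \<in> PI \<and> a \<in> AP P}"

fun summands :: "('a, 'p, 'v) ftp_term \<Rightarrow> ('a, 'p, 'v) ftp_term set" where
  "summands (Plus t u) = summands t \<union> summands u"
| "summands t = {t}"

definition hnf :: "'p set \<Rightarrow> ('p \<Rightarrow> 'a set) \<Rightarrow> ('a, 'p, 'v) ftp_term \<Rightarrow> bool" where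
  "hnf PI AP t \<longleftrightarrow>
     ((t = Delta \<or> (\<forall>s \<in> summands t. (\<exists>a u. s = Pref a u) \<or> (\<exists>P. s = Kappa P)))
      \<and> {P. Kappa P \<in> summands t} = {P. sat PI AP t P})"

end

theory Submission
  imports Defs
begin

text \<open>A sum of two head normal forms is again one (after dropping a
  \<open>\<delta>\<close> summand), since the predicates of a sum are those of its parts. For a prefix \<open>a.t\<close>, with
  \<open>t\<close> in head normal form, every predicate \<open>P\<close> of \<open>a.t\<close> is implicit with \<open>a \<in> A\<^sub>P\<close> and occurs
  as a summand \<open>\<kappa>\<^sub>P\<close> of \<open>t\<close>; idempotence turns \<open>t\<close> into \<open>t + \<kappa>\<^sub>P\<close>, and the prefix axiom
  then exposes \<open>\<kappa>\<^sub>P\<close> at the top level. Adding these finitely many \<open>\<kappa>\<^sub>P\<close> to \<open>a.t\<close> gives the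
  head normal form.\<close>

lemma sat_simps [simp]:
  "sat PI AP (Plus x y) P \<longleftrightarrow> sat PI AP x P \<or> sat PI AP y P"
  "sat PI AP Delta P \<longleftrightarrow> False"
  "sat PI AP (Kappa Q) P \<longleftrightarrow> P = Q"
  "sat PI AP (Pref a x) P \<longleftrightarrow> P \<in> PI \<and> a \<in> AP P \<and> sat PI AP x P"
  "sat PI AP (Var v) P \<longleftrightarrow> False"
  by (auto intro: sat.intros elim: sat.cases)

declare eq_trans [trans]

lemma E_FTP_comm: "eq_deriv (E_FTP PI AP) (Plus s t) (Plus t s)"
  using eq_inst[of "Plus (Var 0) (Var 1)" "Plus (Var 1) (Var 0)" "E_FTP PI AP" "(!) [s, t]"]
  by (simp add: E_FTP_def)

lemma E_FTP_assoc: "eq_deriv (E_FTP PI AP) (Plus (Plus s t) u) (Plus s (Plus t u))"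
  using eq_inst[of "Plus (Plus (Var 0) (Var 1)) (Var 2)" "Plus (Var 0) (Plus (Var 1) (Var 2))"
      "E_FTP PI AP" "(!) [s, t, u]"]
  by (simp add: E_FTP_def)

lemma E_FTP_idem: "eq_deriv (E_FTP PI AP) (Plus s s) s"
  using eq_inst[of "Plus (Var 0) (Var 0)" "Var 0" "E_FTP PI AP" "(!) [s]"]
  by (simp add: E_FTP_def)

lemma E_FTP_Delta: "eq_deriv (E_FTP PI AP) (Plus s Delta) s"
  using eq_inst[of "Plus (Var 0) Delta" "Var 0" "E_FTP PI AP" "(!) [s]"]
  by (simp add: E_FTP_def)

lemma E_FTP_Pref_Kappa:
  assumes "P \<in> PI" "a \<in> AP P"
  shows "eq_deriv (E_FTP PI AP) (Pref a (Plus s (Kappa P)))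
           (Plus (Pref a (Plus s (Kappa P))) (Kappa P))"
proof -
  have "(Pref a (Plus (Var 0) (Kappa P)), Plus (Pref a (Plus (Var 0) (Kappa P))) (Kappa P))
          \<in> E_FTP PI AP"
    using assms unfolding E_FTP_def by blast
  from eq_inst[OF this, of "(!) [s]"] show ?thesis by simp
qed

lemma eq_deriv_Plus_Kappa_summand:
  "Kappa P \<in> summands t \<Longrightarrow> eq_deriv (E_FTP PI AP) t (Plus t (Kappa P))"
proof (induction t)
  case (Kappa Q)
  then show ?case using E_FTP_idem eq_sym by fastforce
next
  case (Plus t u)
  let ?E = "E_FTP PI AP"
  from Plus.prems consider "Kappa P \<in> summands t" | "Kappa P \<in> summands u" by auto
  then show ?case
  proof cases
    case 1
    have "eq_deriv ?E (Plus t u) (Plus (Plus t (Kappa P)) u)"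
      using eq_plus[OF Plus.IH(1)[OF 1] eq_refl] .
    also have "eq_deriv ?E \<dots> (Plus t (Plus (Kappa P) u))" by (rule E_FTP_assoc)
    also have "eq_deriv ?E \<dots> (Plus t (Plus u (Kappa P)))" by (rule eq_plus[OF eq_refl E_FTP_comm])
    also have "eq_deriv ?E \<dots> (Plus (Plus t u) (Kappa P))" by (rule eq_sym[OF E_FTP_assoc])
    finally show ?thesis .
  next
    case 2
    have "eq_deriv ?E (Plus t u) (Plus t (Plus u (Kappa P)))"
      using eq_plus[OF eq_refl Plus.IH(2)[OF 2]] .
    also have "eq_deriv ?E \<dots> (Plus (Plus t u) (Kappa P))" by (rule eq_sym[OF E_FTP_assoc])
    finally show ?thesis .
  qed
qed auto

lemma eq_deriv_Pref_Plus_Kappa: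
  assumes "P \<in> PI" "a \<in> AP P" "Kappa P \<in> summands t"
  shows "eq_deriv (E_FTP PI AP) (Pref a t) (Plus (Pref a t) (Kappa P))"
proof -
  let ?E = "E_FTP PI AP"
  have t: "eq_deriv ?E t (Plus t (Kappa P))"
    using assms(3) by (rule eq_deriv_Plus_Kappa_summand)
  have "eq_deriv ?E (Pref a t) (Pref a (Plus t (Kappa P)))" using t by (rule eq_pref)
  also have "eq_deriv ?E \<dots> (Plus (Pref a (Plus t (Kappa P))) (Kappa P))"
    using assms(1,2) by (rule E_FTP_Pref_Kappa)
  also have "eq_deriv ?E \<dots> (Plus (Pref a t) (Kappa P))"
    by (rule eq_plus[OF eq_sym[OF eq_pref[OF t]] eq_refl])
  finally show ?thesis .
qed

fun plus_Kappas :: "('a, 'p, 'v) ftp_term \<Rightarrow> 'p list \<Rightarrow> ('a, 'p, 'v) ftp_term" where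
  "plus_Kappas s [] = s"
| "plus_Kappas s (P # Ps) = Plus (plus_Kappas s Ps) (Kappa P)"

lemma eq_deriv_plus_Kappas:
  "(\<And>P. P \<in> set Ps \<Longrightarrow> eq_deriv E s (Plus s (Kappa P))) \<Longrightarrow> eq_deriv E s (plus_Kappas s Ps)"
proof (induction Ps)
  case (Cons P Ps)
  have "eq_deriv E s (Plus s (Kappa P))" using Cons.prems by simp
  also have "eq_deriv E \<dots> (Plus (plus_Kappas s Ps) (Kappa P))"
    using Cons by (auto intro: eq_plus eq_refl)
  finally show ?case by simp
qed (simp add: eq_refl)

lemma summands_plus_Kappas: "summands (plus_Kappas s Ps) = summands s \<union> Kappa ` set Ps"
  by (induction Ps) auto

lemma sat_plus_Kappas: "sat PI AP (plus_Kappas s Ps) P \<longleftrightarrow> sat PI AP s P \<or> P \<in> set Ps"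
  by (induction Ps) auto

lemma closed_plus_Kappas: "closed (plus_Kappas s Ps) \<longleftrightarrow> closed s"
  by (induction Ps) auto

lemma hnf_Plus:
  assumes "hnf PI AP t" "hnf PI AP u" "t \<noteq> Delta" "u \<noteq> Delta"
  shows "hnf PI AP (Plus t u)"
  using assms unfolding hnf_def by auto

lemma head_normalize_Plus:
  assumes "hnf PI AP t" "hnf PI AP u" "closed t" "closed u"
  shows "\<exists>v. closed v \<and> hnf PI AP v \<and> eq_deriv (E_FTP PI AP) (Plus t u) v"
proof -
  consider "t = Delta" | "u = Delta" | "t \<noteq> Delta" "u \<noteq> Delta" by blast
  then show ?thesis
  proof cases
    case 1
    have "eq_deriv (E_FTP PI AP) (Plus t u) (Plus u Delta)" using 1 E_FTP_comm by simp
    also have "eq_deriv (E_FTP PI AP) \<dots> u" by (rule E_FTP_Delta)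
    finally show ?thesis using assms by blast
  next
    case 2
    then have "eq_deriv (E_FTP PI AP) (Plus t u) t" using E_FTP_Delta by simp
    then show ?thesis using assms by blast
  next
    case 3
    then have "hnf PI AP (Plus t u)" using assms hnf_Plus by blast
    then show ?thesis using assms eq_refl closed.simps(5) by blast
  qed
qed

lemma head_normalize_Pref:
  fixes PI :: "('p::finite) set"
  assumes "hnf PI AP t" "closed t"
  shows "\<exists>v. closed v \<and> hnf PI AP v \<and> eq_deriv (E_FTP PI AP) (Pref a t) v"
proof -
  obtain Ps where Ps: "set Ps = {P. sat PI AP (Pref a t) P}"
    using finite_list[OF finite] by blast
  have "eq_deriv (E_FTP PI AP) (Pref a t) (Plus (Pref a t) (Kappa P))" if "P \<in> set Ps" for P
    using that Ps assms(1) unfolding hnf_def by (auto intro: eq_deriv_Pref_Plus_Kappa)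
  then have "eq_deriv (E_FTP PI AP) (Pref a t) (plus_Kappas (Pref a t) Ps)"
    by (rule eq_deriv_plus_Kappas)
  moreover have "hnf PI AP (plus_Kappas (Pref a t) Ps)"
    unfolding hnf_def summands_plus_Kappas sat_plus_Kappas using Ps by auto
  moreover have "closed (plus_Kappas (Pref a t) Ps)" using assms(2) by (simp add: closed_plus_Kappas)
  ultimately show ?thesis by blast
qed

theorem lemma2:
  fixes PI :: "('p::finite) set" and AP :: "'p \<Rightarrow> ('a::finite) set"
    and t :: "('a, 'p, nat) ftp_term"
  assumes "closed t"
  shows "\<exists>t'. closed t' \<and> hnf PI AP t' \<and> eq_deriv (E_FTP PI AP) t t'"
  using assms
proof (induction t)
  case Delta
  show ?case by (intro exI[of _ Delta]) (simp add: hnf_def eq_refl)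
next
  case (Kappa P)
  show ?case by (intro exI[of _ "Kappa P"]) (simp add: hnf_def eq_refl)
next
  case (Pref a t)
  then obtain t' where t': "closed t'" "hnf PI AP t'" "eq_deriv (E_FTP PI AP) t t'" by auto
  obtain v where "closed v" "hnf PI AP v" "eq_deriv (E_FTP PI AP) (Pref a t') v"
    using head_normalize_Pref[OF t'(2,1)] by blast
  then show ?case using eq_trans[OF eq_pref[OF t'(3)]] by auto
next
  case (Plus t u)
  then obtain t' u' where t': "closed t'" "hnf PI AP t'" "eq_deriv (E_FTP PI AP) t t'"
    and u': "closed u'" "hnf PI AP u'" "eq_deriv (E_FTP PI AP) u u'" by auto
  obtain v where "closed v" "hnf PI AP v" "eq_deriv (E_FTP PI AP) (Plus t' u') v"
    using head_normalize_Plus[OF t'(2) u'(2) t'(1) u'(1)] by blast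
  then show ?case using eq_trans[OF eq_plus[OF t'(3) u'(3)]] by auto
qed simp

end
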